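(* Let $x^k\in\mathbb R^\ell$, let $\rho\in S_n$ be a permutation, and let $Q_1=(q_1,\dots,q_m)\in\mathbb R^{n\times m}$, $Q_2$, $\Lambda_1,\Lambda_2$ and $Z^k$ be as follows: $A(x^k)=(Q_1\;Q_2)\operatorname{diag}(\Lambda_1,\Lambda_2)(Q_1\;Q_2)^T$ with $(Q_1\;Q_2)$ orthogonal, $\Lambda_1=\operatorname{diag}(\lambda_{\rho_1}(x^k),\dots,\lambda_{\rho_m}(x^k))$, $\Lambda_2=\operatorname{diag}(\lambda_{\rho_{m+1}}(x^k),\dots,\lambda_{\rho_n}(x^k))$, and $Z^k=(Q_1\;Q_2)\operatorname{diag}(\Lambda^*,\Lambda_2)(Q_1\;Q_2)^T$ with $\Lambda^*=\operatorname{diag}(\lambda_1^*,\dots,\lambda_m^* )$. Let $x^{k+1}\in\mathbb R^\ell$ be the solution of the linear system $Bx^{k+1}=c$, where $c\in\mathbb R^\ell$ has entries $c_j=\langle Z^k-A_0,A_j\rangle_F$ (equivalently, $A(x^{k+1})$ is the point of the affine family $\{A(x):x\in\mathbb R^\ell\}$ closest to $Z^k$ in Frobenius norm). Then $$x^{k+1}=x^k-B^{-1}J_r(x^k)^T r(x^k,\rho)=x^k-B^{-1}\nabla F(x^k).$$ Consequently the Lift and Projection iteration ($x^k\mapsto$ lift to $Z^k$, then project) and the iteration $x^{k+1}=x^k-B^{-1}\nabla F(x^k)$ produce the same sequence of iterates from the same starting point (with the same choice of permutations).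
   Context: $A(x)=A_0+\sum_{i=1}^\ell x_iA_i$ for $x\in\mathbb R^\ell$, where $A_0,\dots,A_\ell\in\mathbb R^{n\times n}$ are linearly independent real symmetric matrices; $\lambda_1(x)\le\dots\le\lambda_n(x)$ are its eigenvalues. Given real numbers $\lambda_1^*\le\dots\le\lambda_m^*$ ($m\le n$) and $\rho\in S_n$: $r(x,\rho)\in\mathbb R^m$, $r_i=\lambda_{\rho_i}(x)-\lambda_i^*$; $F(x)=\frac12\|r(x,\rho)\|_2^2$. $\langle X,Y\rangle_F=\operatorname{Tr}(X^TY)$ is the Frobenius inner product. $B\in\mathbb R^{\ell\times\ell}$ is the Gram matrix $B_{ij}=\langle A_i,A_j\rangle_F$, $1\le i,j\le\ell$. $J_r(x)\in\mathbb R^{m\times\ell}$ is the matrix with entries $(J_r)_{ij}=q_i^TA_jq_i$, where $q_i$ is the unit eigenvector of $A(x)$ for $\lambda_{\rho_i}(x)$ (the $i$-th column of $Q_1$), and $\nabla F(x)=J_r(x)^Tr(x,\rho)$. *)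

theory Defs
  imports "Jordan_Normal_Form.Jordan_Normal_Form" "Jordan_Normal_Form.Gauss_Jordan_Elimination"
    "HOL-Library.Multiset"
begin

(* All indices are 0-based: matrices are n x n JNF matrices, the coefficient
   matrices A_1..A_l are  As 0, ..., As (l-1), and x :: real vec has dimension l. *)

definition affine_mat :: "nat \<Rightarrow> real mat \<Rightarrow> (nat \<Rightarrow> real mat) \<Rightarrow> nat \<Rightarrow> real vec \<Rightarrow> real mat" where
  "affine_mat n A0 As l x = mat n n (\<lambda>(i,j). A0 $$ (i,j) + (\<Sum>t<l. x $ t * As t $$ (i,j)))"

definition frob :: "real mat \<Rightarrow> real mat \<Rightarrow> real" where
  "frob X Y = (\<Sum>i<dim_row X. \<Sum>j<dim_col X. X $$ (i,j) * Y $$ (i,j))"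

definition gram :: "(nat \<Rightarrow> real mat) \<Rightarrow> nat \<Rightarrow> real mat" where
  "gram As l = mat l l (\<lambda>(i,j). frob (As i) (As j))"

(* linear independence of A_0, A_1, ..., A_l (coefficient c 0 for A_0, c (t+1) for As t) *)
definition lin_indep_mats :: "nat \<Rightarrow> real mat \<Rightarrow> (nat \<Rightarrow> real mat) \<Rightarrow> nat \<Rightarrow> bool" where
  "lin_indep_mats n A0 As l \<longleftrightarrow>
     (\<forall>c :: nat \<Rightarrow> real.
        (\<forall>i<n. \<forall>j<n. c 0 * A0 $$ (i,j) + (\<Sum>t<l. c (Suc t) * As t $$ (i,j)) = 0)
        \<longrightarrow> (\<forall>i\<le>l. c i = 0))"

definition symmetric_mat :: "real mat \<Rightarrow> bool" where
  "symmetric_mat M \<longleftrightarrow> transpose_mat M = M"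

(* eigenvalues (with multiplicity) in nondecreasing order; eig M 0 \<le> eig M 1 \<le> ... ;
   eig M i is lambda_{i+1} in the paper's 1-based notation *)
definition eig :: "real mat \<Rightarrow> nat \<Rightarrow> real" where
  "eig M i = sorted_list_of_multiset (proots (char_poly M)) ! i"

end

theory Submission imports Defs begin

text \<open>The normal equations of the projection say that the j-th entry of \<open>B x\<^sup>k\<^sup>+\<^sup>1\<close> is
  \<open>\<langle>Z\<^sup>k - A\<^sub>0, A\<^sub>j\<rangle>\<close>, while the j-th entry of \<open>B x\<^sup>k\<close> is \<open>\<langle>A(x\<^sup>k) - A\<^sub>0, A\<^sub>j\<rangle>\<close>.
  Since \<open>Z\<^sup>k\<close> and \<open>A(x\<^sup>k)\<close> share the eigenvectors and differ only in the first m
  eigenvalues, \<open>\<langle>Z\<^sup>k - A(x\<^sup>k), A\<^sub>j\<rangle> = \<Sum>\<^sub>i (\<lambda>\<^sup>*\<^sub>i - \<lambda>\<^sub>\<rho>\<^sub>i) q\<^sub>i\<^sup>T A\<^sub>j q\<^sub>i = -(J\<^sub>r\<^sup>T r)\<^sub>j\<close>.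
  Hence \<open>B x\<^sup>k\<^sup>+\<^sup>1 = B x\<^sup>k - J\<^sub>r\<^sup>T r\<close>, and B is invertible because
  \<open>x\<^sup>T B x = \<parallel>\<Sum>\<^sub>t x\<^sub>t A\<^sub>t\<parallel>\<^sub>F\<^sup>2\<close> vanishes only for \<open>x = 0\<close> by linear independence.\<close>

definition lin_comb_mat :: "nat \<Rightarrow> (nat \<Rightarrow> real mat) \<Rightarrow> nat \<Rightarrow> real vec \<Rightarrow> real mat" where
  "lin_comb_mat n As l x = mat n n (\<lambda>(i,j). \<Sum>t<l. x $ t * As t $$ (i,j))"

lemma lin_comb_mat_carrier [simp]: "lin_comb_mat n As l x \<in> carrier_mat n n"
  by (simp add: lin_comb_mat_def)

lemma affine_mat_eq_add_lin_comb_mat: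
  "A0 \<in> carrier_mat n n \<Longrightarrow> affine_mat n A0 As l x = A0 + lin_comb_mat n As l x"
  by (auto simp: affine_mat_def lin_comb_mat_def)

lemma gram_carrier [simp]: "gram As l \<in> carrier_mat l l"
  by (simp add: gram_def)

lemma frob_carrier: "X \<in> carrier_mat n m \<Longrightarrow> frob X Y = (\<Sum>i<n. \<Sum>j<m. X $$ (i,j) * Y $$ (i,j))"
  by (simp add: frob_def)

lemma frob_comm: "X \<in> carrier_mat n m \<Longrightarrow> Y \<in> carrier_mat n m \<Longrightarrow> frob X Y = frob Y X"
  by (simp add: frob_carrier mult.commute)

lemma frob_add_left:
  "X \<in> carrier_mat n m \<Longrightarrow> Y \<in> carrier_mat n m \<Longrightarrow> frob (X + Y) M = frob X M + frob Y M"
  by (auto simp: frob_def distrib_right sum.distrib[symmetric] intro!: sum.cong)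

lemma frob_minus_left:
  "X \<in> carrier_mat n m \<Longrightarrow> Y \<in> carrier_mat n m \<Longrightarrow> frob (X - Y) M = frob X M - frob Y M"
  by (auto simp: frob_def left_diff_distrib sum_subtractf[symmetric] intro!: sum.cong)

lemma sum_swap_innermost:
  "(\<Sum>i\<in>I. \<Sum>j\<in>J. \<Sum>t\<in>T. f i j t) = (\<Sum>t\<in>T. \<Sum>i\<in>I. \<Sum>j\<in>J. f i j t)"
proof -
  have "(\<Sum>i\<in>I. \<Sum>j\<in>J. \<Sum>t\<in>T. f i j t) = (\<Sum>i\<in>I. \<Sum>t\<in>T. \<Sum>j\<in>J. f i j t)"
    by (rule sum.cong[OF refl], rule sum.swap)
  also have "\<dots> = (\<Sum>t\<in>T. \<Sum>i\<in>I. \<Sum>j\<in>J. f i j t)"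
    by (rule sum.swap)
  finally show ?thesis .
qed

lemma frob_lin_comb_mat_right:
  assumes "X \<in> carrier_mat n n"
  shows "frob X (lin_comb_mat n As l x) = (\<Sum>t<l. x $ t * frob X (As t))"
proof -
  have "frob X (lin_comb_mat n As l x) = (\<Sum>i<n. \<Sum>j<n. \<Sum>t<l. x $ t * (X $$ (i,j) * As t $$ (i,j)))"
    using assms by (simp add: frob_carrier lin_comb_mat_def sum_distrib_left mult_ac)
  also have "\<dots> = (\<Sum>t<l. \<Sum>i<n. \<Sum>j<n. x $ t * (X $$ (i,j) * As t $$ (i,j)))"
    by (rule sum_swap_innermost)
  finally show ?thesis
    using assms by (simp add: frob_carrier sum_distrib_left)
qed

lemma gram_mult_vec:
  assumes As: "\<And>t. t < l \<Longrightarrow> As t \<in> carrier_mat n n"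
    and x: "x \<in> carrier_vec l" and j: "j < l"
  shows "(gram As l *\<^sub>v x) $ j = frob (lin_comb_mat n As l x) (As j)"
proof -
  have "(gram As l *\<^sub>v x) $ j = (\<Sum>t<l. x $ t * frob (As j) (As t))"
    using x j by (simp add: gram_def scalar_prod_def lessThan_atLeast0 mult.commute)
  also have "\<dots> = frob (As j) (lin_comb_mat n As l x)"
    using As[OF j] by (simp add: frob_lin_comb_mat_right)
  finally show ?thesis
    using As[OF j] by (simp add: frob_comm[of _ n n])
qed

lemma gram_quadratic_form:
  assumes As: "\<And>t. t < l \<Longrightarrow> As t \<in> carrier_mat n n" and x: "x \<in> carrier_vec l"
  shows "x \<bullet> (gram As l *\<^sub>v x) = frob (lin_comb_mat n As l x) (lin_comb_mat n As l x)"
proof -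
  have "x \<bullet> (gram As l *\<^sub>v x) = (\<Sum>j<l. x $ j * (gram As l *\<^sub>v x) $ j)"
    using x by (simp add: scalar_prod_def lessThan_atLeast0 gram_def)
  also have "\<dots> = (\<Sum>j<l. x $ j * frob (lin_comb_mat n As l x) (As j))"
    by (simp add: gram_mult_vec[OF As x])
  finally show ?thesis
    by (simp add: frob_lin_comb_mat_right)
qed

lemma frob_self_eq_0_imp_zero:
  assumes X: "X \<in> carrier_mat n m" and "frob X X = 0"
  shows "X = 0\<^sub>m n m"
proof (rule eq_matI)
  fix i j assume i: "i < dim_row (0\<^sub>m n m)" and j: "j < dim_col (0\<^sub>m n m)"
  have "(\<Sum>i<n. \<Sum>j<m. (X $$ (i,j))\<^sup>2) = 0"
    using assms by (simp add: frob_carrier power2_eq_square)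
  then have "(\<Sum>j<m. (X $$ (i,j))\<^sup>2) = 0"
    using i by (subst (asm) sum_nonneg_eq_0_iff) (auto intro: sum_nonneg)
  then have "(X $$ (i,j))\<^sup>2 = 0"
    using j by (subst (asm) sum_nonneg_eq_0_iff) auto
  then show "X $$ (i,j) = 0\<^sub>m n m $$ (i,j)"
    using i j by simp
qed (use X in auto)

lemma lin_comb_mat_eq_0_imp_zero:
  assumes "lin_indep_mats n A0 As l" and x: "x \<in> carrier_vec l"
    and "lin_comb_mat n As l x = 0\<^sub>m n n"
  shows "x = 0\<^sub>v l"
proof -
  define c where "c k = (if k = 0 then 0 else x $ (k - 1))" for k
  have "(\<Sum>t<l. x $ t * As t $$ (i,j)) = 0" if "i < n" "j < n" for i j
    using arg_cong[OF assms(3), of "\<lambda>M. M $$ (i,j)"] that by (simp add: lin_comb_mat_def)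
  then have "\<forall>i<n. \<forall>j<n. c 0 * A0 $$ (i,j) + (\<Sum>t<l. c (Suc t) * As t $$ (i,j)) = 0"
    by (simp add: c_def)
  then have "\<forall>k\<le>l. c k = 0"
    using assms(1) unfolding lin_indep_mats_def by blast
  then have "x $ t = 0" if "t < l" for t
    using that by (auto simp: c_def elim!: allE[of _ "Suc t"])
  then show ?thesis
    using x by (intro eq_vecI) auto
qed

lemma gram_mat_inverse_exists:
  assumes As: "\<And>t. t < l \<Longrightarrow> As t \<in> carrier_mat n n"
    and indep: "\<And>x. x \<in> carrier_vec l \<Longrightarrow> lin_comb_mat n As l x = 0\<^sub>m n n \<Longrightarrow> x = 0\<^sub>v l"
  shows "\<exists>Bi. mat_inverse (gram As l) = Some Bi"
proof (rule ccontr)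
  note B = gram_carrier[of As l]
  assume "\<nexists>Bi. mat_inverse (gram As l) = Some Bi"
  then have "det (gram As l) = 0"
    using mat_inverse(1)[OF B] det_non_zero_imp_unit[OF B] by fastforce
  then obtain x where x: "x \<in> carrier_vec l" "x \<noteq> 0\<^sub>v l" "gram As l *\<^sub>v x = 0\<^sub>v l"
    using det_0_iff_vec_prod_zero_field[OF B] by auto
  have "frob (lin_comb_mat n As l x) (lin_comb_mat n As l x) = 0"
    using x by (simp add: gram_quadratic_form[OF As, symmetric])
  then have "lin_comb_mat n As l x = 0\<^sub>m n n"
    by (intro frob_self_eq_0_imp_zero) simp
  with x indep show False
    by blast
qed

lemma mat_inverse_solve:
  assumes "mat_inverse B = Some Bi" and B: "B \<in> carrier_mat l l"
    and x: "x \<in> carrier_vec l" and y: "y \<in> carrier_vec l" and v: "v \<in> carrier_vec l"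
    and "B *\<^sub>v y = B *\<^sub>v x - v"
  shows "y = x - Bi *\<^sub>v v"
proof -
  have Bi: "Bi * B = 1\<^sub>m l" "Bi \<in> carrier_mat l l"
    using mat_inverse(2)[OF B assms(1)] by auto
  have cancel: "Bi *\<^sub>v (B *\<^sub>v z) = z" if "z \<in> carrier_vec l" for z
    using that Bi B by (simp flip: assoc_mult_mat_vec)
  have "y = Bi *\<^sub>v (B *\<^sub>v x - v)"
    using cancel[OF y] assms(6) by simp
  also have "\<dots> = x - Bi *\<^sub>v v"
    using Bi B x v cancel[OF x] by (simp add: mult_minus_distrib_mat_vec)
  finally show ?thesis .
qed

lemma congruence_diag_entry:
  assumes Q: "Q \<in> carrier_mat n n" and i: "i < n" and j: "j < n"
  shows "(Q * mat_diag n f * transpose_mat Q) $$ (i,j) = (\<Sum>k<n. Q $$ (i,k) * f k * Q $$ (j,k))"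
proof -
  have "Q * mat_diag n f = mat n n (\<lambda>(i,j). Q $$ (i,j) * f j)"
    using mat_diag_mult_right[OF Q] by simp
  then show ?thesis
    using Q i j by (simp add: scalar_prod_def lessThan_atLeast0)
qed

lemma frob_congruence_diag:
  assumes Q: "Q \<in> carrier_mat n n" and M: "M \<in> carrier_mat n n"
  shows "frob (Q * mat_diag n f * transpose_mat Q) M = (\<Sum>k<n. f k * (col Q k \<bullet> (M *\<^sub>v col Q k)))"
proof -
  have C: "Q * mat_diag n f * transpose_mat Q \<in> carrier_mat n n"
    using Q by (intro mult_carrier_mat[of _ n n]) auto
  have "frob (Q * mat_diag n f * transpose_mat Q) M
      = (\<Sum>a<n. \<Sum>b<n. (\<Sum>k<n. Q $$ (a,k) * f k * Q $$ (b,k)) * M $$ (a,b))"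
    unfolding frob_carrier[OF C] by (intro sum.cong refl) (simp add: congruence_diag_entry[OF Q] del: index_mult_mat)
  also have "\<dots> = (\<Sum>a<n. \<Sum>b<n. \<Sum>k<n. f k * (Q $$ (a,k) * (M $$ (a,b) * Q $$ (b,k))))"
    unfolding sum_distrib_right by (intro sum.cong refl) (simp only: mult_ac)
  also have "\<dots> = (\<Sum>k<n. \<Sum>a<n. \<Sum>b<n. f k * (Q $$ (a,k) * (M $$ (a,b) * Q $$ (b,k))))"
    by (rule sum_swap_innermost)
  also have "\<dots> = (\<Sum>k<n. f k * (\<Sum>a<n. Q $$ (a,k) * (\<Sum>b<n. M $$ (a,b) * Q $$ (b,k))))"
    by (simp add: sum_distrib_left)
  also have "\<dots> = (\<Sum>k<n. f k * (col Q k \<bullet> (M *\<^sub>v col Q k)))"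
    using Q M by (intro sum.cong refl) (simp add: scalar_prod_def lessThan_atLeast0)
  finally show ?thesis .
qed

lemma frob_lift_minus_offset:
  assumes "m \<le> n" and A0: "A0 \<in> carrier_mat n n"
    and As: "\<And>t. t < l \<Longrightarrow> As t \<in> carrier_mat n n"
    and Q: "Q \<in> carrier_mat n n" and x: "x \<in> carrier_vec l" and j: "j < l"
    and spectral: "affine_mat n A0 As l x = Q * mat_diag n d * transpose_mat Q"
  shows "frob (Q * mat_diag n (\<lambda>i. if i < m then lamstar i else d i) * transpose_mat Q - A0) (As j)
    = (gram As l *\<^sub>v x) $ j - (\<Sum>k<m. (col Q k \<bullet> (As j *\<^sub>v col Q k)) * (d k - lamstar k))"
proof -
  define e where "e = (\<lambda>i. if i < m then lamstar i else d i)"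
  define g where "g k = col Q k \<bullet> (As j *\<^sub>v col Q k)" for k
  have Aj: "As j \<in> carrier_mat n n"
    using As[OF j] .
  have Z: "Q * mat_diag n e * transpose_mat Q \<in> carrier_mat n n"
    using Q by (intro mult_carrier_mat[of _ n n]) auto
  have "frob A0 (As j) + (gram As l *\<^sub>v x) $ j = frob (affine_mat n A0 As l x) (As j)"
    using A0 by (simp add: affine_mat_eq_add_lin_comb_mat frob_add_left gram_mult_vec[OF As x j])
  also have "\<dots> = (\<Sum>k<n. d k * g k)"
    unfolding spectral g_def using Q Aj by (rule frob_congruence_diag)
  finally have A0_part: "frob A0 (As j) = (\<Sum>k<n. d k * g k) - (gram As l *\<^sub>v x) $ j"
    by linarith
  have "(\<Sum>k<n. (e k - d k) * g k) = (\<Sum>k<m. (lamstar k - d k) * g k)"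
    using \<open>m \<le> n\<close> by (intro sum.mono_neutral_cong_right) (auto simp: e_def)
  then have "frob (Q * mat_diag n e * transpose_mat Q - A0) (As j)
      = (gram As l *\<^sub>v x) $ j - (\<Sum>k<m. g k * (d k - lamstar k))"
    using Z A0 A0_part frob_congruence_diag[OF Q Aj, of e]
    by (simp add: frob_minus_left g_def sum_subtractf algebra_simps)
  then show ?thesis
    unfolding e_def g_def .
qed

theorem mainTheorem2:
  fixes n m l :: nat
    and A0 :: "real mat" and As :: "nat \<Rightarrow> real mat"
    and lamstar :: "nat \<Rightarrow> real" and \<rho> :: "nat \<Rightarrow> nat"
    and xk xk1 :: "real vec" and Q :: "real mat"
  assumes "m \<le> n"
    and "A0 \<in> carrier_mat n n" and "symmetric_mat A0"
    and "\<And>t. t < l \<Longrightarrow> As t \<in> carrier_mat n n \<and> symmetric_mat (As t)"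
    and "lin_indep_mats n A0 As l"
    and "\<And>i j. i \<le> j \<Longrightarrow> j < m \<Longrightarrow> lamstar i \<le> lamstar j"
    and "\<rho> permutes {..<n}"
    and "xk \<in> carrier_vec l"
    and "Q \<in> carrier_mat n n" and "transpose_mat Q * Q = 1\<^sub>m n"
    and "affine_mat n A0 As l xk
           = Q * mat_diag n (\<lambda>i. eig (affine_mat n A0 As l xk) (\<rho> i)) * transpose_mat Q"
    and "xk1 \<in> carrier_vec l"
    and "gram As l *\<^sub>v xk1 =
           vec l (\<lambda>j. frob
             (Q * mat_diag n (\<lambda>i. if i < m then lamstar i
                                   else eig (affine_mat n A0 As l xk) (\<rho> i)) * transpose_mat Q
              - A0) (As j))"
  shows "xk1 = xk - the (mat_inverse (gram As l)) *\<^sub>v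
           (transpose_mat (mat m l (\<lambda>(i,j). col Q i \<bullet> (As j *\<^sub>v col Q i)))
              *\<^sub>v vec m (\<lambda>i. eig (affine_mat n A0 As l xk) (\<rho> i) - lamstar i))"
proof -
  have As: "\<And>t. t < l \<Longrightarrow> As t \<in> carrier_mat n n"
    using assms(4) by blast
  define d where "d = (\<lambda>i. eig (affine_mat n A0 As l xk) (\<rho> i))"
  define J where "J = mat m l (\<lambda>(i,j). col Q i \<bullet> (As j *\<^sub>v col Q i))"
  define r where "r = vec m (\<lambda>i. d i - lamstar i)"
  obtain Bi where Bi: "mat_inverse (gram As l) = Some Bi"
    using gram_mat_inverse_exists[of l As n] As lin_comb_mat_eq_0_imp_zero[OF assms(5)] by blast
  have normal_eq: "gram As l *\<^sub>v xk1 = gram As l *\<^sub>v xk - J\<^sup>T *\<^sub>v r"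
  proof (rule eq_vecI)
    fix j assume "j < dim_vec (gram As l *\<^sub>v xk - J\<^sup>T *\<^sub>v r)"
    then have j: "j < l"
      by (simp add: gram_def J_def)
    have "(J\<^sup>T *\<^sub>v r) $ j = (\<Sum>k<m. (col Q k \<bullet> (As j *\<^sub>v col Q k)) * (d k - lamstar k))"
      using j by (simp add: J_def r_def scalar_prod_def lessThan_atLeast0)
    then have "frob (Q * mat_diag n (\<lambda>i. if i < m then lamstar i else d i) * transpose_mat Q - A0) (As j)
        = (gram As l *\<^sub>v xk) $ j - (J\<^sup>T *\<^sub>v r) $ j"
      using frob_lift_minus_offset[OF assms(1,2) As assms(9,8) j assms(11)[folded d_def]] by simp
    then show "(gram As l *\<^sub>v xk1) $ j = (gram As l *\<^sub>v xk - J\<^sup>T *\<^sub>v r) $ j"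
      using j assms(13) unfolding d_def by (simp add: J_def gram_def)
  qed (simp add: J_def gram_def)
  have "J\<^sup>T *\<^sub>v r \<in> carrier_vec l"
    by (intro mult_mat_vec_carrier[of _ l m]) (auto simp: J_def r_def)
  then have "xk1 = xk - Bi *\<^sub>v (J\<^sup>T *\<^sub>v r)"
    using mat_inverse_solve[OF Bi gram_carrier assms(8,12) _ normal_eq] by blast
  then show ?thesis
    using Bi by (simp add: d_def J_def r_def)
qed

end
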